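(* Let $m\ge 2$ be an integer and $n'=2^{2m-1}-2^m-2^{m-1}$. Let $\mathbf{C}$ be a binary linear $[2^{2m}-1,3m]$ code whose set of nonzero weights is $\{2^{2m-1}-2^{m-1},\,2^{2m-1},\,2^{2m-1}+2^{m-1}\}$. Then the code $\mathbf{C}'$ obtained from $\mathbf{C}$ by the extension construction is a minimal binary linear code with parameters $[2^{2m}-1+n',\ 3m,\ 2^{2m-1}-2^{m-1}]_2$ and maximum weight $2^{2m}-2^m$, and it violates the Ashikhmin–Barg condition.
   Context: Extension construction for a binary linear $[N,K]$ code $\mathbf{D}$ with $K\ge2$, minimum nonzero weight $w_{min}$, maximum weight $w_{max}$ and $n'=2w_{min}-w_{max}\ge 1$: choose a basis $\mathbf{r}_1,\dots,\mathbf{r}_K$ with $wt(\mathbf{r}_1)=w_{max}$, $wt(\mathbf{r}_2)=w_{min}$; the extended code is generated by $(\mathbf{1},\mathbf{r}_1),(\mathbf{0},\mathbf{r}_2),\dots,(\mathbf{0},\mathbf{r}_K)$ in $\mathbf{F}_2^{n'+N}$, where $\mathbf{1},\mathbf{0}\in\mathbf{F}_2^{n'}$ are all-one and zero vectors. Minimal code: any two nonzero codewords with nested supports are equal (binary case). Ashikhmin–Barg condition (binary): $w_{min}/w_{max}>1/2$. (Codes $\mathbf{C}$ as in the hypothesis exist, e.g. the Kasami codes.) *)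

theory Defs
  imports Complex_Main
begin

text \<open>Binary vectors of length N are represented by their supports, i.e. subsets of
  {0..<N}; vector addition over F_2 is symmetric difference, the zero vector is {},
  and the Hamming weight is the cardinality of the support.\<close>

definition vadd :: "nat set \<Rightarrow> nat set \<Rightarrow> nat set" where
  "vadd a b = (a - b) \<union> (b - a)"

definition lincomb :: "(nat \<Rightarrow> nat set) \<Rightarrow> nat set \<Rightarrow> nat set" where
  "lincomb r S = {x. odd (card {i\<in>S. x \<in> r i})}"

definition span2 :: "nat \<Rightarrow> (nat \<Rightarrow> nat set) \<Rightarrow> nat set set" where
  "span2 K r = lincomb r ` Pow {0..<K}"

definition binary_linear :: "nat \<Rightarrow> nat set set \<Rightarrow> bool" where
  "binary_linear N C \<longleftrightarrow> C \<subseteq> Pow {0..<N} \<and> {} \<in> C \<and> (\<forall>a\<in>C. \<forall>b\<in>C. vadd a b \<in> C)"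

definition is_basis :: "nat set set \<Rightarrow> nat \<Rightarrow> (nat \<Rightarrow> nat set) \<Rightarrow> bool" where
  "is_basis C K r \<longleftrightarrow> span2 K r = C \<and> inj_on (lincomb r) (Pow {0..<K})"

definition binary_linear_code :: "nat \<Rightarrow> nat \<Rightarrow> nat set set \<Rightarrow> bool" where
  "binary_linear_code N K C \<longleftrightarrow> binary_linear N C \<and> (\<exists>r. is_basis C K r)"

definition nonzero_weights :: "nat set set \<Rightarrow> nat set" where
  "nonzero_weights C = {card c | c. c \<in> C \<and> c \<noteq> {}}"

definition wmin :: "nat set set \<Rightarrow> nat" where
  "wmin C = Min (nonzero_weights C)"

definition wmax :: "nat set set \<Rightarrow> nat" where
  "wmax C = Max (nonzero_weights C)"

definition min_distance :: "nat set set \<Rightarrow> nat" where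
  "min_distance C = Min {card (vadd a b) | a b. a \<in> C \<and> b \<in> C \<and> a \<noteq> b}"

definition binary_linear_code_params :: "nat \<Rightarrow> nat \<Rightarrow> nat \<Rightarrow> nat set set \<Rightarrow> bool" where
  "binary_linear_code_params N K d C \<longleftrightarrow> binary_linear_code N K C \<and> min_distance C = d"

definition minimal_code :: "nat set set \<Rightarrow> bool" where
  "minimal_code C \<longleftrightarrow> (\<forall>a\<in>C. \<forall>b\<in>C. a \<noteq> {} \<longrightarrow> b \<noteq> {} \<longrightarrow> a \<subseteq> b \<longrightarrow> a = b)"

definition ashikhmin_barg :: "nat set set \<Rightarrow> bool" where
  "ashikhmin_barg C \<longleftrightarrow> real (wmin C) / real (wmax C) > 1 / 2"

text \<open>With basis r 0 (the r_1 of the paper, of weight wmax D),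
  r 1 (the r_2, of weight wmin D), ..., r (K-1), and n' = 2 wmin D - wmax D, the
  extended code is generated by (1, r 0), (0, r 1), ..., (0, r (K-1)) in F_2^(n'+N);
  the first n' coordinates are positions 0..<n', the coordinates of D are shifted by n'.\<close>
definition ext_nprime :: "nat set set \<Rightarrow> nat" where
  "ext_nprime D = 2 * wmin D - wmax D"

definition ext_generators :: "nat set set \<Rightarrow> (nat \<Rightarrow> nat set) \<Rightarrow> nat \<Rightarrow> nat set" where
  "ext_generators D r i =
     (if i = 0 then {0..<ext_nprime D} \<union> (\<lambda>x. x + ext_nprime D) ` r 0
      else (\<lambda>x. x + ext_nprime D) ` r i)"

definition extension_code :: "nat set set \<Rightarrow> nat \<Rightarrow> (nat \<Rightarrow> nat set) \<Rightarrow> nat set set" where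
  "extension_code D K r = span2 K (ext_generators D r)"

end

theory Submission imports Defs begin

text \<open>Let n' = 2 wmin - wmax. A codeword of the extended code avoiding the first generator is
  (0, c) with c in D, of weight in [wmin, wmax]; one using it is (1, c), of weight n' + wt c in
  [n' + wmin, 2 wmin]. So the extension keeps the dimension K and the minimum weight wmin, its
  maximum weight is 2 wmin, and wmin/wmax = 1/2 violates Ashikhmin--Barg. Yet it is minimal as soon
  as n' \<ge> 1: nested nonzero codewords a \<subset> b give wt b = wt a + wt (b - a), which is at least
  2 wmin > wmax, and at least n' + 2 wmin if b meets the first n' coordinates (then a or b - a
  does), exceeding the bounds above in both cases. For the three Kasami weights 2^(2m-1) and
  2^(2m-1) \<plusminus> 2^(m-1) one gets n' = 2^(2m-1) - 3 * 2^(m-1) \<ge> 1.\<close>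

lemma card_symdiff:
  assumes "finite A" "finite B"
  shows "card (sym_diff A B) + 2 * card (A \<inter> B) = card A + card B"
proof -
  have "card (sym_diff A B) = card ((A \<union> B) - (A \<inter> B))"
    by (rule arg_cong[where f = card]) blast
  also have "\<dots> = card (A \<union> B) - card (A \<inter> B)"
    using assms by (intro card_Diff_subset) auto
  finally have "card (sym_diff A B) = card (A \<union> B) - card (A \<inter> B)" .
  moreover have "card (A \<inter> B) \<le> card (A \<union> B)"
    using assms by (intro card_mono) auto
  ultimately show ?thesis
    using card_Un_Int[OF assms] by simp
qed

lemma lincomb_empty [simp]: "lincomb r {} = {}"
  by (simp add: lincomb_def)

lemma lincomb_singleton [simp]: "lincomb r {i} = r i"
proof -
  have "{j \<in> {i}. x \<in> r j} = (if x \<in> r i then {i} else {})" for x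
    by auto
  then show ?thesis
    by (auto simp: lincomb_def)
qed

lemma lincomb_symdiff:
  assumes "finite S" "finite T"
  shows "lincomb r (sym_diff S T) = vadd (lincomb r S) (lincomb r T)"
proof (rule set_eqI)
  fix x
  let ?A = "{i \<in> S. x \<in> r i}" and ?B = "{i \<in> T. x \<in> r i}"
  have "{i \<in> sym_diff S T. x \<in> r i} = sym_diff ?A ?B"
    by blast
  moreover have "card (sym_diff ?A ?B) + 2 * card (?A \<inter> ?B) = card ?A + card ?B"
    using assms by (intro card_symdiff) auto
  then have "odd (card (sym_diff ?A ?B)) \<longleftrightarrow> odd (card ?A) \<noteq> odd (card ?B)"
    by presburger
  ultimately show "x \<in> lincomb r (sym_diff S T) \<longleftrightarrow> x \<in> vadd (lincomb r S) (lincomb r T)"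
    by (auto simp: lincomb_def vadd_def)
qed

lemma vadd_empty_right [simp]: "vadd c {} = c"
  by (auto simp: vadd_def)

lemma vadd_eq_empty_iff: "vadd a b = {} \<longleftrightarrow> a = b"
  by (auto simp: vadd_def)

lemma vadd_subset: "a \<subseteq> b \<Longrightarrow> vadd a b = b - a"
  by (auto simp: vadd_def)

lemma binary_linear_finite: "binary_linear N C \<Longrightarrow> c \<in> C \<Longrightarrow> finite c"
  unfolding binary_linear_def by (meson PowD finite_atLeastLessThan finite_subset subsetD)

lemma finite_nonzero_weights:
  assumes "binary_linear N C"
  shows "finite (nonzero_weights C)"
proof -
  have "finite C"
    using assms unfolding binary_linear_def by (meson finite_Pow_iff finite_atLeastLessThan finite_subset)
  moreover have "nonzero_weights C = card ` {c \<in> C. c \<noteq> {}}"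
    by (auto simp: nonzero_weights_def)
  ultimately show ?thesis
    by simp
qed

lemma codeword_weight_bounds:
  assumes "binary_linear N C" "c \<in> C" "c \<noteq> {}"
  shows "wmin C \<le> card c" and "card c \<le> wmax C"
proof -
  have "card c \<in> nonzero_weights C"
    using assms(2,3) by (auto simp: nonzero_weights_def)
  then show "wmin C \<le> card c" "card c \<le> wmax C"
    using finite_nonzero_weights[OF assms(1)] by (simp_all add: wmin_def wmax_def)
qed

lemma min_distance_eq_wmin:
  assumes "binary_linear N C"
  shows "min_distance C = wmin C"
proof -
  have "{card (vadd a b) | a b. a \<in> C \<and> b \<in> C \<and> a \<noteq> b} = nonzero_weights C"
  proof (intro equalityI subsetI)
    fix w
    assume "w \<in> {card (vadd a b) | a b. a \<in> C \<and> b \<in> C \<and> a \<noteq> b}"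
    then obtain a b where "a \<in> C" "b \<in> C" "a \<noteq> b" "w = card (vadd a b)"
      by blast
    moreover have "vadd a b \<in> C"
      using assms \<open>a \<in> C\<close> \<open>b \<in> C\<close> by (simp add: binary_linear_def)
    ultimately show "w \<in> nonzero_weights C"
      by (auto simp: nonzero_weights_def vadd_eq_empty_iff)
  next
    fix w
    assume "w \<in> nonzero_weights C"
    then obtain c where "c \<in> C" "c \<noteq> {}" "w = card c"
      by (auto simp: nonzero_weights_def)
    moreover have "{} \<in> C"
      using assms by (simp add: binary_linear_def)
    ultimately show "w \<in> {card (vadd a b) | a b. a \<in> C \<and> b \<in> C \<and> a \<noteq> b}"
      by (metis (mono_tags, lifting) mem_Collect_eq vadd_empty_right)
  qed
  then show ?thesis
    by (simp add: min_distance_def wmin_def)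
qed

lemma not_ashikhmin_barg_if_wmax_double: "wmax C = 2 * wmin C \<Longrightarrow> \<not> ashikhmin_barg C"
  by (cases "wmin C = 0") (simp_all add: ashikhmin_barg_def)

lemma is_basis_lincomb_mem: "is_basis C K r \<Longrightarrow> S \<subseteq> {0..<K} \<Longrightarrow> lincomb r S \<in> C"
  by (auto simp: is_basis_def span2_def)

lemma is_basis_lincomb_eq_empty_iff:
  assumes "is_basis C K r" "S \<subseteq> {0..<K}"
  shows "lincomb r S = {} \<longleftrightarrow> S = {}"
  using assms lincomb_empty[of r] unfolding is_basis_def by (metis Pow_iff empty_subsetI inj_onD)

lemma lincomb_ext_generators:
  "lincomb (ext_generators D r) S =
     (if 0 \<in> S then {0..<ext_nprime D} else {}) \<union> (\<lambda>x. x + ext_nprime D) ` lincomb r S"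
proof (rule set_eqI)
  fix x
  let ?n = "ext_nprime D"
  show "x \<in> lincomb (ext_generators D r) S \<longleftrightarrow>
      x \<in> (if 0 \<in> S then {0..<?n} else {}) \<union> (\<lambda>x. x + ?n) ` lincomb r S"
  proof (cases "x < ?n")
    case True
    then have "{i \<in> S. x \<in> ext_generators D r i} = (if 0 \<in> S then {0} else {})"
      by (auto simp: ext_generators_def)
    then show ?thesis
      using True by (auto simp: lincomb_def)
  next
    case False
    then obtain y where y: "x = y + ?n"
      by (metis add.commute le_Suc_ex not_less)
    then have "{i \<in> S. x \<in> ext_generators D r i} = {i \<in> S. y \<in> r i}"
      by (auto simp: ext_generators_def)
    then show ?thesis
      using y False by (auto simp: lincomb_def)
  qed
qed

lemma lincomb_from_ext_generators:
  "lincomb r S = {y. y + ext_nprime D \<in> lincomb (ext_generators D r) S}"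
  unfolding lincomb_ext_generators by auto

lemma zero_mem_lincomb_ext_generators_iff:
  "0 < ext_nprime D \<Longrightarrow> 0 \<in> lincomb (ext_generators D r) S \<longleftrightarrow> 0 \<in> S"
  unfolding lincomb_ext_generators by auto

lemma card_lincomb_ext_generators:
  assumes "finite (lincomb r S)"
  shows "card (lincomb (ext_generators D r) S) = (if 0 \<in> S then ext_nprime D else 0) + card (lincomb r S)"
proof -
  have "card ((\<lambda>x. x + ext_nprime D) ` lincomb r S) = card (lincomb r S)"
    by (rule card_image) (auto simp: inj_on_def)
  moreover have "card (lincomb (ext_generators D r) S) =
      card (if 0 \<in> S then {0..<ext_nprime D} else {}) + card ((\<lambda>x. x + ext_nprime D) ` lincomb r S)"
    unfolding lincomb_ext_generators by (rule card_Un_disjoint) (use assms in auto)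
  ultimately show ?thesis
    by simp
qed

locale extension_construction =
  fixes N K :: nat and D :: "nat set set" and r :: "nat \<Rightarrow> nat set"
  assumes linear: "binary_linear N D"
    and basis: "is_basis D K r"
    and two_le_K: "2 \<le> K"
    and card_r0: "card (r 0) = wmax D"
    and card_r1: "card (r 1) = wmin D"
    and wmax_less: "wmax D < 2 * wmin D"
begin

lemma nprime_pos: "0 < ext_nprime D"
  using wmax_less by (simp add: ext_nprime_def)

lemma extension_code_eq: "extension_code D K r = lincomb (ext_generators D r) ` Pow {0..<K}"
  by (simp add: extension_code_def span2_def)

lemma finite_lincomb: "S \<subseteq> {0..<K} \<Longrightarrow> finite (lincomb r S)"
  using binary_linear_finite[OF linear] is_basis_lincomb_mem[OF basis] by blast

lemma card_ext_generator:
  assumes "i < K"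
  shows "card (ext_generators D r i) = (if i = 0 then ext_nprime D else 0) + card (r i)"
  using card_lincomb_ext_generators[OF finite_lincomb, of "{i}"] assms by simp

lemma card_extension_codeword:
  assumes "c \<in> extension_code D K r" "c \<noteq> {}"
  shows "card c \<in> (if 0 \<in> c then {ext_nprime D + wmin D..2 * wmin D} else {wmin D..wmax D})"
proof -
  obtain S where S: "S \<subseteq> {0..<K}" "c = lincomb (ext_generators D r) S"
    using assms(1) by (auto simp: extension_code_eq)
  then have "S \<noteq> {}"
    using assms(2) by auto
  then have "lincomb r S \<in> D" "lincomb r S \<noteq> {}"
    using S(1) is_basis_lincomb_mem[OF basis] is_basis_lincomb_eq_empty_iff[OF basis] by auto
  then have "wmin D \<le> card (lincomb r S)" "card (lincomb r S) \<le> wmax D"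
    using codeword_weight_bounds[OF linear] by auto
  then show ?thesis
    using S card_lincomb_ext_generators[OF finite_lincomb[OF S(1)]]
      zero_mem_lincomb_ext_generators_iff[OF nprime_pos] wmax_less
    by (auto simp: ext_nprime_def)
qed

lemma binary_linear_code_extension:
  "binary_linear_code (N + ext_nprime D) K (extension_code D K r)"
proof -
  let ?g = "ext_generators D r"
  have "lincomb ?g S \<subseteq> {0..<N + ext_nprime D}" if "S \<subseteq> {0..<K}" for S
  proof -
    have "lincomb r S \<subseteq> {0..<N}"
      using linear is_basis_lincomb_mem[OF basis that] by (auto simp: binary_linear_def)
    then show ?thesis
      unfolding lincomb_ext_generators by auto
  qed
  moreover have "vadd (lincomb ?g S) (lincomb ?g T) \<in> lincomb ?g ` Pow {0..<K}"
    if "S \<subseteq> {0..<K}" "T \<subseteq> {0..<K}" for S T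
    using that lincomb_symdiff[of S T ?g] finite_subset[OF _ finite_atLeastLessThan] by blast
  moreover have "inj_on (lincomb ?g) (Pow {0..<K})"
    using basis lincomb_from_ext_generators[of r _ D]
    unfolding is_basis_def inj_on_def by metis
  ultimately show ?thesis
    unfolding binary_linear_code_def binary_linear_def is_basis_def
    by (auto simp: extension_code_eq span2_def extension_code_def intro!: image_eqI[of _ _ "{}"])
qed

lemma binary_linear_extension: "binary_linear (N + ext_nprime D) (extension_code D K r)"
  using binary_linear_code_extension by (simp add: binary_linear_code_def)

lemma finite_nonzero_weights_extension: "finite (nonzero_weights (extension_code D K r))"
  by (rule finite_nonzero_weights[OF binary_linear_extension])

lemma nonzero_weights_extension_code:
  "nonzero_weights (extension_code D K r) \<subseteq> {wmin D..2 * wmin D}"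
  using card_extension_codeword wmax_less by (fastforce simp: nonzero_weights_def split: if_splits)

lemma ext_generator_weight_mem:
  assumes "i < K"
  shows "card (ext_generators D r i) \<in> nonzero_weights (extension_code D K r)"
proof -
  have "ext_generators D r i \<in> extension_code D K r"
    unfolding extension_code_eq using assms lincomb_singleton by (intro image_eqI[of _ _ "{i}"]) auto
  moreover have "ext_generators D r i \<noteq> {}"
    using assms is_basis_lincomb_eq_empty_iff[OF basis, of "{i}"]
    by (auto simp: ext_generators_def)
  ultimately show ?thesis
    unfolding nonzero_weights_def by blast
qed

lemma wmin_extension_code: "wmin (extension_code D K r) = wmin D"
  unfolding wmin_def[of "extension_code D K r"]
proof (rule Min_eqI)
  show "wmin D \<in> nonzero_weights (extension_code D K r)"
    using ext_generator_weight_mem[of 1] card_ext_generator[of 1] two_le_K card_r1 by simp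
qed (use finite_nonzero_weights_extension nonzero_weights_extension_code in auto)

lemma wmax_extension_code: "wmax (extension_code D K r) = 2 * wmin D"
  unfolding wmax_def
proof (rule Max_eqI)
  show "2 * wmin D \<in> nonzero_weights (extension_code D K r)"
    using ext_generator_weight_mem[of 0] card_ext_generator[of 0] two_le_K card_r0 wmax_less
    by (simp add: ext_nprime_def)
qed (use finite_nonzero_weights_extension nonzero_weights_extension_code in auto)

lemma minimal_extension_code: "minimal_code (extension_code D K r)"
  unfolding minimal_code_def
proof (intro ballI impI)
  fix a b
  assume ab: "a \<in> extension_code D K r" "b \<in> extension_code D K r" "a \<noteq> {}" "b \<noteq> {}" "a \<subseteq> b"
  show "a = b"
  proof (rule ccontr)
    assume "a \<noteq> b"
    define d where "d = b - a"
    have "d \<in> extension_code D K r"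
      using binary_linear_extension ab vadd_subset[OF ab(5)] unfolding d_def binary_linear_def by metis
    moreover have "d \<noteq> {}"
      using \<open>a \<noteq> b\<close> ab(5) by (auto simp: d_def)
    moreover have "card b = card a + card d"
      using ab(5) binary_linear_finite[OF binary_linear_extension ab(2)] unfolding d_def
      by (metis card_Diff_subset card_mono finite_subset le_add_diff_inverse)
    moreover have "0 \<in> b \<longleftrightarrow> 0 \<in> a \<or> 0 \<in> d"
      using ab(5) by (auto simp: d_def)
    ultimately show False
      using card_extension_codeword[of a] card_extension_codeword[of b] card_extension_codeword[of d]
        ab nprime_pos wmax_less by (auto split: if_splits)
  qed
qed

end

lemma powers_of_two_split:
  assumes "2 \<le> m"
  shows "(2::nat) ^ m = 2 * 2 ^ (m - 1)"
    and "(2::nat) ^ (2 * m - 1) = 2 * (2 ^ (m - 1) * 2 ^ (m - 1))"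
    and "(2::nat) ^ (2 * m) = 4 * (2 ^ (m - 1) * 2 ^ (m - 1))"
    and "2 * 2 ^ (m - 1) \<le> (2::nat) ^ (m - 1) * 2 ^ (m - 1)"
proof -
  obtain k where m: "m = Suc k" and k: "1 \<le> k"
    using assms by (metis Suc_le_D Suc_le_mono one_add_one plus_1_eq_Suc)
  have "(2::nat) ^ (2 * m - 1) = 2 ^ Suc (k + k)" and "(2::nat) ^ (2 * m) = 2 ^ Suc (Suc (k + k))"
    by (simp_all add: m)
  then show "(2::nat) ^ m = 2 * 2 ^ (m - 1)"
    "(2::nat) ^ (2 * m - 1) = 2 * (2 ^ (m - 1) * 2 ^ (m - 1))"
    "(2::nat) ^ (2 * m) = 4 * (2 ^ (m - 1) * 2 ^ (m - 1))"
    by (simp_all only: m power_Suc power_add diff_Suc_1)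
  show "2 * 2 ^ (m - 1) \<le> (2::nat) ^ (m - 1) * 2 ^ (m - 1)"
    using k by (simp add: m mult_le_mono1 self_le_power)
qed

theorem proposition4p2:
  fixes m :: nat and C :: "nat set set" and r :: "nat \<Rightarrow> nat set"
  assumes "m \<ge> 2"
    and "binary_linear_code (2^(2*m) - 1) (3*m) C"
    and "nonzero_weights C = {2^(2*m-1) - 2^(m-1), 2^(2*m-1), 2^(2*m-1) + 2^(m-1)}"
    and "is_basis C (3*m) r"
    and "card (r 0) = wmax C"
    and "card (r 1) = wmin C"
  shows "minimal_code (extension_code C (3*m) r)
    \<and> binary_linear_code_params (2^(2*m) - 1 + (2^(2*m-1) - 2^m - 2^(m-1))) (3*m)
          (2^(2*m-1) - 2^(m-1)) (extension_code C (3*m) r)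
    \<and> wmax (extension_code C (3*m) r) = 2^(2*m) - 2^m
    \<and> \<not> ashikhmin_barg (extension_code C (3*m) r)"
proof -
  define p :: nat where "p = 2 ^ (m - 1)"
  define q :: nat where "q = p * p"
  have pq: "2 ^ m = 2 * p" "2 ^ (2 * m - 1) = 2 * q" "2 ^ (2 * m) = 4 * q" "2 * p \<le> q" "0 < p"
    using powers_of_two_split[OF assms(1)] unfolding p_def q_def by simp_all
  have "nonzero_weights C = {2 * q - p, 2 * q, 2 * q + p}"
    using assms(3) unfolding pq p_def .
  then have wmin: "wmin C = 2 * q - p" and wmax: "wmax C = 2 * q + p"
    using pq by (auto simp: wmin_def wmax_def)
  interpret extension_construction "2 ^ (2 * m) - 1" "3 * m" C r
    using assms wmin wmax pq
    by unfold_locales (auto simp: binary_linear_code_def)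
  let ?E = "extension_code C (3 * m) r"
  have lin: "binary_linear_code (2 ^ (2 * m) - 1 + ext_nprime C) (3 * m) ?E"
    by (rule binary_linear_code_extension)
  then have "min_distance ?E = wmin C"
    using min_distance_eq_wmin wmin_extension_code by (auto simp: binary_linear_code_def)
  moreover have "\<not> ashikhmin_barg ?E"
    using not_ashikhmin_barg_if_wmax_double wmin_extension_code wmax_extension_code by metis
  moreover have "ext_nprime C = 2 ^ (2 * m - 1) - 2 ^ m - 2 ^ (m - 1)"
    unfolding ext_nprime_def wmin wmax pq p_def[symmetric] using pq by simp
  moreover have "2 * wmin C = 2 ^ (2 * m) - 2 ^ m" and "wmin C = 2 ^ (2 * m - 1) - 2 ^ (m - 1)"
    unfolding wmin pq p_def[symmetric] using pq by simp_all
  ultimately show ?thesis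
    using lin minimal_extension_code wmax_extension_code
    by (simp add: binary_linear_code_params_def)
qed

end
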